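(* Let $w$ be a word over $\Omega$ of length $k$ and let $i \in I \setminus \{s\}$. Then $i + T(i) < k - s$.
   Context: Let $\Omega$ be a finite alphabet; a word of length $k$ is written $w = w_k w_{k-1}\dots w_1$. Autocorrelation: for $1 \le i \le k$, $b_i = 1$ if $w_j = w_{k-i+j}$ for all $j=1,\dots,i$, else $b_i=0$. $s = \max\{j \in\{1,\dots,k-1\}: b_j = 1\}$, or $s=0$ if no such $j$. For $1 \le i \le k-1$ with $b_i = 1$, let $[i] = \max\{ j \in \{1,\dots,k-1\} : b_j = 1 \text{ and } i = k - t(k-j) \text{ for some integer } 1 \le t \le \lfloor k/(k-j) \rfloor\}$, and $I = \{[i] : 1 \le i \le k-1,\ b_i = 1\}$ (its largest element is $s$ when $s>0$). For $i \in I$, $T(i) = \max\{ t > 0 : w_{k-i}w_{k-i-1}\dots w_{k-i-t+1} = w_{k-j}w_{k-j-1}\dots w_{k-j-t+1} \text{ for some } j \in I,\ j > i\}$, with $T(i) = 0$ if this set is empty. *)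

theory Defs
  imports Main
begin

text \<open>A word of length k is w_k w_(k-1) ... w_1; we represent it by a function
  w :: nat => 'a whose values at positions 1..k are the letters.\<close>

definition autocorr :: "(nat \<Rightarrow> 'a) \<Rightarrow> nat \<Rightarrow> nat \<Rightarrow> bool" where
  "autocorr w k i \<longleftrightarrow> (\<forall>j\<in>{1..i}. w j = w (k - i + j))"

definition s_of :: "(nat \<Rightarrow> 'a) \<Rightarrow> nat \<Rightarrow> nat" where
  "s_of w k = (if \<exists>j\<in>{1..k-1}. autocorr w k j
               then Max {j\<in>{1..k-1}. autocorr w k j} else 0)"

definition cls :: "(nat \<Rightarrow> 'a) \<Rightarrow> nat \<Rightarrow> nat \<Rightarrow> nat" where
  "cls w k i = Max {j\<in>{1..k-1}. autocorr w k j \<and>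
      (\<exists>t::nat. 1 \<le> t \<and> t \<le> k div (k - j) \<and> i = k - t * (k - j))}"

definition I_set :: "(nat \<Rightarrow> 'a) \<Rightarrow> nat \<Rightarrow> nat set" where
  "I_set w k = cls w k ` {i\<in>{1..k-1}. autocorr w k i}"

text \<open>T(i): longest common block w_(k-i) ... w_(k-i-t+1) = w_(k-j) ... w_(k-j-t+1)
  for some j in I with j > i; the blocks are required to lie inside the word
  (t <= k - j, which implies t <= k - i).\<close>

definition T_of :: "(nat \<Rightarrow> 'a) \<Rightarrow> nat \<Rightarrow> nat \<Rightarrow> nat" where
  "T_of w k i = (let S = {t::nat. 0 < t \<and> (\<exists>j\<in>I_set w k. i < j \<and> t \<le> k - j \<and>
                        (\<forall>m<t. w (k - i - m) = w (k - j - m)))}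
                 in if S = {} then 0 else Max S)"

end

theory Submission
  imports Defs
begin

text \<open>A border of length j is the same as a period k - j, and the longest border s corresponds
  to the shortest period p = k - s. By the weak Fine--Wilf theorem p divides every period q with
  q + p \<le> k, so every border j \<ge> p lies in the class of s, whose representative is s itself;
  hence every other element of I is smaller than p. For the bound on T(i): if the block of length
  t following position k - i agrees with the one following k - j and i + t \<ge> p, then together
  with the borders i and j this makes j - i a period on a window of length p, and since p is a
  period, j - i is a period of the whole word. Then p divides j - i and k - j, hence k - i,
  which puts i into the class of s.\<close>

definition has_period :: "(nat \<Rightarrow> 'a) \<Rightarrow> nat \<Rightarrow> nat \<Rightarrow> bool" where
  "has_period w k q \<longleftrightarrow> (\<forall>n. 1 \<le> n \<longrightarrow> n + q \<le> k \<longrightarrow> w n = w (n + q))"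

lemma autocorr_iff_has_period:
  assumes "i \<le> k"
  shows "autocorr w k i \<longleftrightarrow> has_period w k (k - i)"
proof
  assume "autocorr w k i"
  then show "has_period w k (k - i)"
    unfolding autocorr_def has_period_def using assms by (auto simp: add.commute)
next
  assume h: "has_period w k (k - i)"
  show "autocorr w k i"
    unfolding autocorr_def using h[unfolded has_period_def, rule_format] assms
    by (auto simp: add.commute)
qed

lemma has_period_mult:
  assumes "has_period w k q" "1 \<le> a" "a + c * q \<le> k"
  shows "w a = w (a + c * q)"
  using assms(3)
proof (induction c)
  case 0
  then show ?case by simp
next
  case (Suc c)
  then have "w a = w (a + c * q)" by simp
  also have "\<dots> = w (a + c * q + q)"
    using assms(1,2) Suc.prems unfolding has_period_def by auto
  finally show ?case by (simp add: algebra_simps)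
qed

lemma has_period_mod_eq:
  assumes "has_period w k q" "1 \<le> a" "1 \<le> b" "a \<le> k" "b \<le> k" "a mod q = b mod q"
  shows "w a = w b"
proof -
  have ordered: "w a = w b" if ab: "1 \<le> a" "b \<le> k" "a \<le> b" "a mod q = b mod q" for a b
  proof -
    obtain c where "b - a = q * c"
      using ab(3,4) by (metis mod_eq_dvd_iff_nat dvdE)
    then have "b = a + c * q" using ab(3) by (simp add: algebra_simps)
    then show ?thesis using has_period_mult[OF assms(1) ab(1), of c] ab(2) by simp
  qed
  show ?thesis
  proof (cases "a \<le> b")
    case True
    then show ?thesis using ordered assms(2,5,6) by blast
  next
    case False
    then show ?thesis using ordered[of b a] assms(3,4,6) by simp
  qed
qed

lemma has_period_diff:
  assumes a: "has_period w k a" and b: "has_period w k b" and "a < b" "a + b \<le> k"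
  shows "has_period w k (b - a)"
  unfolding has_period_def
proof (intro allI impI)
  note shift_a = a[unfolded has_period_def, rule_format]
  note shift_b = b[unfolded has_period_def, rule_format]
  fix n assume n: "1 \<le> n" "n + (b - a) \<le> k"
  show "w n = w (n + (b - a))"
  proof (cases "a < n")
    case True
    have "w (n - a) = w n" using shift_a[of "n - a"] True n by simp
    moreover have "w (n - a) = w (n + (b - a))" using shift_b[of "n - a"] True n \<open>a < b\<close> by simp
    ultimately show ?thesis by simp
  next
    case False
    have "w n = w (n + b)" using shift_b[of n] False n \<open>a + b \<le> k\<close> by simp
    moreover have "w (n + (b - a)) = w (n + b)"
      using shift_a[of "n + (b - a)"] False n \<open>a < b\<close> \<open>a + b \<le> k\<close> by simp
    ultimately show ?thesis by simp
  qed
qed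

lemma has_period_gcd:
  "has_period w k a \<Longrightarrow> has_period w k b \<Longrightarrow> a + b \<le> k \<Longrightarrow> has_period w k (gcd a b)"
proof (induction "a + b" arbitrary: a b rule: less_induct)
  case less
  consider "a = 0 \<or> b = 0 \<or> a = b" | "0 < a" "a < b" | "0 < b" "b < a"
    by linarith
  then show ?case
  proof cases
    case 1
    then show ?thesis using less.prems by auto
  next
    case 2
    then have "has_period w k (b - a)" using less.prems has_period_diff by blast
    then have "has_period w k (gcd a (b - a))"
      using less.hyps[of a "b - a"] less.prems 2 by simp
    moreover have "gcd a (b - a) = gcd a b"
      using 2 by (metis gcd.commute gcd_diff1_nat less_imp_le)
    ultimately show ?thesis by simp
  next
    case 3
    then have "has_period w k (a - b)" using less.prems has_period_diff[of w k b a] by simp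
    then have "has_period w k (gcd (a - b) b)"
      using less.hyps[of "a - b" b] less.prems 3 by simp
    moreover have "gcd (a - b) b = gcd a b" using 3 by (metis gcd_diff1_nat less_imp_le)
    ultimately show ?thesis by simp
  qed
qed

lemma has_period_from_window:
  assumes per: "has_period w k p" and "0 < p" "1 \<le> L" "L + p + d \<le> k + 1"
    and window: "\<And>n. L \<le> n \<Longrightarrow> n < L + p \<Longrightarrow> w n = w (n + d)"
  shows "has_period w k d"
  unfolding has_period_def
proof (intro allI impI)
  fix n assume n: "1 \<le> n" "n + d \<le> k"
  define r where "r = L + (n + p - L mod p) mod p"
  have r: "L \<le> r" "r < L + p" unfolding r_def using \<open>0 < p\<close> by auto
  have "r mod p = (L mod p + (n + p - L mod p)) mod p"
    unfolding r_def by (metis mod_add_left_eq mod_add_right_eq)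
  also have "L mod p + (n + p - L mod p) = n + p"
    using mod_less_divisor[of p L] \<open>0 < p\<close> by linarith
  finally have r_mod: "r mod p = n mod p" by simp
  then have "(r + d) mod p = (n + d) mod p" by (metis mod_add_left_eq)
  moreover have "r + d \<le> k" using r(2) assms(4) by linarith
  ultimately have "w n = w r" "w (r + d) = w (n + d)"
    using r(1) r_mod n \<open>1 \<le> L\<close> by (auto intro!: has_period_mod_eq[OF per])
  with window[OF r] show "w n = w (n + d)" by simp
qed

subsection \<open>The longest border and the shortest period\<close>

lemma le_s_of:
  assumes "j \<in> {1..k-1}" "autocorr w k j"
  shows "j \<le> s_of w k"
  using assms unfolding s_of_def by (auto intro: Max_ge)

lemma s_of_border:
  assumes "0 < s_of w k"
  shows "s_of w k \<in> {1..k-1} \<and> autocorr w k (s_of w k)"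
proof -
  have "\<exists>j\<in>{1..k-1}. autocorr w k j"
    using assms unfolding s_of_def by (auto split: if_splits)
  then have "s_of w k = Max {j\<in>{1..k-1}. autocorr w k j}"
    and "{j\<in>{1..k-1}. autocorr w k j} \<noteq> {}"
    unfolding s_of_def by auto
  then show ?thesis using Max_in[of "{j\<in>{1..k-1}. autocorr w k j}"] by simp
qed

lemma min_period_le:
  assumes "has_period w k q" "1 \<le> q" "q < k"
  shows "k - s_of w k \<le> q"
proof -
  have "k - q \<in> {1..k-1}" "autocorr w k (k - q)"
    using autocorr_iff_has_period[of "k - q" k w] assms by auto
  then have "k - q \<le> s_of w k" by (rule le_s_of)
  then show ?thesis by linarith
qed

lemma min_period_dvd:
  assumes "0 < s_of w k" "has_period w k q" "1 \<le> q" "q + (k - s_of w k) \<le> k"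
  shows "(k - s_of w k) dvd q"
proof -
  define p where "p = k - s_of w k"
  have p: "1 \<le> p" "p < k" "has_period w k p"
    using s_of_border[OF assms(1)] autocorr_iff_has_period[of "s_of w k" k w]
    unfolding p_def by auto
  have g: "has_period w k (gcd q p)"
    using has_period_gcd[OF assms(2) p(3)] assms(4) unfolding p_def by simp
  have "1 \<le> gcd q p" using assms(3) by (simp add: Suc_le_eq)
  moreover have "gcd q p \<le> p" using p(1) by simp
  ultimately have "p \<le> gcd q p"
    using min_period_le[OF g] p(2) unfolding p_def by linarith
  with \<open>gcd q p \<le> p\<close> have "gcd q p = p" by simp
  with gcd_dvd1[of q p] have "p dvd q" by (simp only:)
  then show ?thesis unfolding p_def .
qed

lemma border_dvd_min_period:
  assumes "j \<in> {1..k-1}" "autocorr w k j" "k - s_of w k \<le> j"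
  shows "(k - s_of w k) dvd (k - j)"
proof -
  have "0 < s_of w k" using le_s_of[OF assms(1,2)] assms(1) by simp
  moreover have "has_period w k (k - j)"
    using autocorr_iff_has_period[of j k w] assms(1,2) by auto
  ultimately show ?thesis
    by (rule min_period_dvd) (use assms(1,3) in auto)
qed

lemma cls_eq_Max:
  assumes "1 \<le> i" "i < k"
  shows "cls w k i = Max {j\<in>{1..k-1}. autocorr w k j \<and> (k - j) dvd (k - i)}"
proof -
  have "(\<exists>t. 1 \<le> t \<and> t \<le> k div (k - j) \<and> i = k - t * (k - j)) \<longleftrightarrow> (k - j) dvd (k - i)"
    if "j \<in> {1..k-1}" for j
  proof
    have "0 < k - j" using that by auto
    note div_iff = less_eq_div_iff_mult_less_eq[OF this]
    assume "\<exists>t. 1 \<le> t \<and> t \<le> k div (k - j) \<and> i = k - t * (k - j)"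
    then obtain t where "t \<le> k div (k - j)" "i = k - t * (k - j)" by blast
    moreover have "t * (k - j) \<le> k"
      using calculation(1) div_iff by simp
    ultimately show "(k - j) dvd (k - i)" by simp
  next
    have "0 < k - j" using that by auto
    note div_iff = less_eq_div_iff_mult_less_eq[OF this]
    assume "(k - j) dvd (k - i)"
    then obtain t where "k - i = (k - j) * t" by (rule dvdE)
    then have t: "k - i = t * (k - j)" by (simp add: mult.commute)
    then have "1 \<le> t" using assms by (cases t) auto
    moreover have "t \<le> k div (k - j)"
      using t div_iff by simp
    ultimately show "\<exists>t. 1 \<le> t \<and> t \<le> k div (k - j) \<and> i = k - t * (k - j)"
      using t assms by (intro exI[of _ t]) auto
  qed
  then have "{j\<in>{1..k-1}. autocorr w k j \<and>
      (\<exists>t. 1 \<le> t \<and> t \<le> k div (k - j) \<and> i = k - t * (k - j))} =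
    {j\<in>{1..k-1}. autocorr w k j \<and> (k - j) dvd (k - i)}"
    by blast
  then show ?thesis unfolding cls_def by simp
qed

lemma cls_border:
  assumes "i \<in> {1..k-1}" "autocorr w k i"
  shows "cls w k i \<in> {1..k-1} \<and> autocorr w k (cls w k i) \<and> (k - cls w k i) dvd (k - i)"
proof -
  let ?C = "{j\<in>{1..k-1}. autocorr w k j \<and> (k - j) dvd (k - i)}"
  have "i \<in> ?C" using assms by simp
  then have "Max ?C \<in> ?C" by (intro Max_in) auto
  then show ?thesis using cls_eq_Max[of i k w] assms by auto
qed

lemma le_cls:
  assumes "i \<in> {1..k-1}" "j \<in> {1..k-1}" "autocorr w k j" "(k - j) dvd (k - i)"
  shows "j \<le> cls w k i"
  using cls_eq_Max[of i k w] assms by (auto intro: Max_ge)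

lemma I_set_border:
  assumes "c \<in> I_set w k"
  shows "c \<in> {1..k-1} \<and> autocorr w k c"
  using assms cls_border unfolding I_set_def by blast

lemma I_set_dvd_min_period_imp_eq_s_of:
  assumes "c \<in> I_set w k" "(k - s_of w k) dvd (k - c)"
  shows "c = s_of w k"
proof -
  obtain i where i: "i \<in> {1..k-1}" "autocorr w k i" "c = cls w k i"
    using assms(1) unfolding I_set_def by blast
  have c: "c \<in> {1..k-1}" "autocorr w k c" "(k - c) dvd (k - i)"
    using cls_border[OF i(1,2)] i(3) by auto
  have "0 < s_of w k" using le_s_of[OF c(1,2)] c(1) by simp
  then have s: "s_of w k \<in> {1..k-1}" "autocorr w k (s_of w k)"
    using s_of_border by blast+
  have "s_of w k \<le> c"
    using le_cls[OF i(1) s] assms(2) c(3) i(3) dvd_trans by blast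
  then show ?thesis using le_s_of[OF c(1,2)] by simp
qed

lemma I_set_lt_min_period:
  assumes "i \<in> I_set w k - {s_of w k}"
  shows "i < k - s_of w k"
proof (rule ccontr)
  assume "\<not> ?thesis"
  then have "(k - s_of w k) dvd (k - i)"
    using assms I_set_border border_dvd_min_period by (metis DiffD1 not_less)
  then show False using assms I_set_dvd_min_period_imp_eq_s_of by blast
qed

subsection \<open>The bound on T\<close>

text \<open>Beyond position k - j - t the shift by j - i preserves letters: inside the block by
  the hypothesis on the block, and in the suffix of length i because both i and j are borders.\<close>

lemma shift_eq_after_block:
  assumes "autocorr w k i" "autocorr w k j" "i < j" "j \<le> k" "t \<le> k - j"
    and block: "\<forall>m<t. w (k - i - m) = w (k - j - m)"
    and n: "k - j - t < n" "n + (j - i) \<le> k"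
  shows "w n = w (n + (j - i))"
proof (cases "n \<le> k - j")
  case True
  then have "k - j - n < t" using n(1) assms(5) by linarith
  with block have "w (k - i - (k - j - n)) = w (k - j - (k - j - n))" by blast
  moreover have "k - j - (k - j - n) = n" "k - i - (k - j - n) = n + (j - i)"
    using True assms(3,4) by auto
  ultimately show ?thesis by simp
next
  case False
  define a where "a = n - (k - j)"
  have a: "1 \<le> a" "a \<le> i" using False n(2) assms(3,4) unfolding a_def by auto
  have "w a = w (k - j + a)" "w a = w (k - i + a)"
    using assms(1,2) a assms(3) unfolding autocorr_def by auto
  moreover have "k - j + a = n" "k - i + a = n + (j - i)"
    using False assms(3,4) unfolding a_def by auto
  ultimately show ?thesis by simp
qed

lemma block_lt_min_period:
  assumes i: "i \<in> I_set w k - {s_of w k}" and j: "j \<in> I_set w k" "i < j"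
    and "t \<le> k - j" and block: "\<forall>m<t. w (k - i - m) = w (k - j - m)"
  shows "i + t < k - s_of w k"
proof (rule ccontr)
  assume long: "\<not> i + t < k - s_of w k"
  define p where "p = k - s_of w k"
  define d where "d = j - i"
  have bi: "i \<in> {1..k-1}" "autocorr w k i" and bj: "j \<in> {1..k-1}" "autocorr w k j"
    using i j I_set_border by blast+
  have "j < k" using bj(1) by auto
  have "j \<le> s_of w k" using le_s_of[OF bj] .
  then have s: "s_of w k \<in> {1..k-1}" "autocorr w k (s_of w k)"
    using s_of_border[of w k] bj(1) by auto
  have p: "0 < p" "has_period w k p"
    using s autocorr_iff_has_period[of "s_of w k" k w] unfolding p_def by auto
  have window_fits: "k - j - t + 1 + p + d \<le> k + 1"
    using long \<open>t \<le> k - j\<close> j(2) \<open>j < k\<close> unfolding p_def d_def by linarith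
  have "has_period w k d"
  proof (rule has_period_from_window[OF p(2) p(1) _ window_fits])
    show "w n = w (n + d)" if "k - j - t + 1 \<le> n" "n < k - j - t + 1 + p" for n
    proof -
      have "k - j - t < n" "n + (j - i) \<le> k"
        using that window_fits unfolding d_def by linarith+
      then show ?thesis
        using shift_eq_after_block[OF bi(2) bj(2) j(2) _ \<open>t \<le> k - j\<close> block] \<open>j < k\<close>
        unfolding d_def by simp
    qed
  qed simp
  moreover have "d + p \<le> k" "1 \<le> d"
    using \<open>j \<le> s_of w k\<close> s(1) j(2) unfolding p_def d_def by auto
  ultimately have "p dvd d"
    using min_period_dvd[of w k d] s(1) unfolding p_def by auto
  then have "p \<le> d" using \<open>1 \<le> d\<close> by (simp add: dvd_imp_le)
  then have "p \<le> j" unfolding d_def by linarith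
  then have "p dvd (k - j)" using border_dvd_min_period[OF bj] unfolding p_def by simp
  moreover have "k - i = (k - j) + d" using j(2) \<open>j < k\<close> unfolding d_def by simp
  ultimately have "p dvd (k - i)" using \<open>p dvd d\<close> by simp
  then show False using I_set_dvd_min_period_imp_eq_s_of i unfolding p_def by blast
qed

theorem proposition4p1:
  fixes \<Omega> :: "'a set" and w :: "nat \<Rightarrow> 'a" and k i :: nat
  assumes "finite \<Omega>"
    and "\<forall>j\<in>{1..k}. w j \<in> \<Omega>"
    and "i \<in> I_set w k - {s_of w k}"
  shows "i + T_of w k i < k - s_of w k"
proof -
  define S where "S = {t::nat. 0 < t \<and> (\<exists>j\<in>I_set w k. i < j \<and> t \<le> k - j \<and>
                        (\<forall>m<t. w (k - i - m) = w (k - j - m)))}"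
  have T: "T_of w k i = (if S = {} then 0 else Max S)"
    unfolding T_of_def S_def Let_def by simp
  show ?thesis
  proof (cases "S = {}")
    case True
    then show ?thesis using T I_set_lt_min_period[OF assms(3)] by simp
  next
    case False
    have "finite S" unfolding S_def by (rule finite_subset[of _ "{..k}"]) auto
    then have "Max S \<in> S" using False by simp
    then obtain j where "j \<in> I_set w k" "i < j" "Max S \<le> k - j"
      "\<forall>m<Max S. w (k - i - m) = w (k - j - m)"
      unfolding S_def by blast
    then have "i + Max S < k - s_of w k" by (rule block_lt_min_period[OF assms(3)])
    then show ?thesis using T False by simp
  qed
qed

end
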